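(* For every $t\in[0,T]$ and every symmetric positive semidefinite $n\times n$ matrix $S$, one has $\tilde Q(S)\ge 0$ (at time $t$), where $\tilde Q$ is defined in the context.
   Context: Fix $T>0$, integers $n,l_1,l_2,d\ge1$, and deterministic coefficients on $[0,T]$: $C^1,\dots,C^d$ with values in $\mathbb R^{n\times n}$, $D^{1j}$ in $\mathbb R^{n\times l_1}$, $D^{2j}$ in $\mathbb R^{n\times l_2}$ ($j=1,\dots,d$), $Q$ with values in nonnegative definite symmetric $n\times n$ matrices, and $R^1,R^2$ with values in positive definite symmetric $l_1\times l_1$, $l_2\times l_2$ matrices. Block notation (time argument suppressed): $C:=\begin{pmatrix}C^1\\ \vdots\\ C^d\end{pmatrix}\in\mathbb R^{nd\times n}$, $D^i:=\begin{pmatrix}D^{i1}\\ \vdots\\ D^{id}\end{pmatrix}\in\mathbb R^{nd\times l_i}$, and for an $n\times n$ matrix $S$, $\hat S:=\mathrm{diag}(S,\dots,S)$ ($d$ copies), so that e.g. $C'\hat SC=\sum_j (C^j)'SC^j$ and $(D^1)'\hat SD^2=\sum_j(D^{1j})'SD^{2j}$. Define $\Lambda_i(S):=R^i+(D^i)'\hat SD^i$ ($i=1,2$), $\hat\Lambda(S):=\Lambda_1(S)-(D^1)'\hat SD^2\Lambda_2(S)^{-1}(D^2)'\hat SD^1$, $U(S):=\hat S-\hat SD^2\Lambda_2(S)^{-1}(D^2)'\hat S$ (an $nd\times nd$ matrix), $\tilde Q(S):=Q+C'U(S)C-C'U(S)D^1\hat\Lambda(S)^{-1}(D^1)'U(S)C$.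 *)

theory Defs
  imports "HOL-Analysis.Analysis"
begin

text \<open>Block (nd)-indexed objects are indexed by the product type 'd \<times> 'n,
  the pair (j,i) standing for row i of block j.\<close>

definition nonneg_def_mat :: "real^'n^'n \<Rightarrow> bool" where
  "nonneg_def_mat A \<longleftrightarrow> transpose A = A \<and> (\<forall>x. 0 \<le> x \<bullet> (A *v x))"

definition pos_def_mat :: "real^'n^'n \<Rightarrow> bool" where
  "pos_def_mat A \<longleftrightarrow> transpose A = A \<and> (\<forall>x. x \<noteq> 0 \<longrightarrow> 0 < x \<bullet> (A *v x))"

definition stack :: "('d::finite \<Rightarrow> real^'b^'n) \<Rightarrow> real^'b^('d \<times> 'n)" where
  "stack M = (\<chi> p. M (fst p) $ (snd p))"

definition hat :: "real^'n^'n \<Rightarrow> real^('d::finite \<times> 'n)^('d \<times> 'n)" where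
  "hat S = (\<chi> p q. if fst p = fst q then S $ snd p $ snd q else 0)"

definition Lambda_i :: "real^'l^'l \<Rightarrow> ('d::finite \<Rightarrow> real^'l^'n) \<Rightarrow> real^'n^'n \<Rightarrow> real^'l^'l" where
  "Lambda_i R D S = R + transpose (stack D) ** (hat S :: real^('d \<times> 'n)^('d \<times> 'n)) ** stack D"

definition Lambda_hat ::
  "real^'l1^'l1 \<Rightarrow> real^'l2^'l2 \<Rightarrow> ('d::finite \<Rightarrow> real^'l1^'n) \<Rightarrow> ('d \<Rightarrow> real^'l2^'n)
   \<Rightarrow> real^'n^'n \<Rightarrow> real^'l1^'l1" where
  "Lambda_hat R1 R2 D1 D2 S =
     Lambda_i R1 D1 S
     - transpose (stack D1) ** (hat S :: real^('d \<times> 'n)^('d \<times> 'n)) ** stack D2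
       ** matrix_inv (Lambda_i R2 D2 S) ** transpose (stack D2) ** hat S ** stack D1"

definition U_mat ::
  "real^'l2^'l2 \<Rightarrow> ('d::finite \<Rightarrow> real^'l2^'n) \<Rightarrow> real^'n^'n \<Rightarrow> real^('d \<times> 'n)^('d \<times> 'n)" where
  "U_mat R2 D2 S = hat S - hat S ** stack D2 ** matrix_inv (Lambda_i R2 D2 S) ** transpose (stack D2) ** hat S"

definition Q_tilde ::
  "('d::finite \<Rightarrow> real^'n^'n) \<Rightarrow> ('d \<Rightarrow> real^'l1^'n) \<Rightarrow> ('d \<Rightarrow> real^'l2^'n)
   \<Rightarrow> real^'n^'n \<Rightarrow> real^'l1^'l1 \<Rightarrow> real^'l2^'l2 \<Rightarrow> real^'n^'n \<Rightarrow> real^'n^'n" where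
  "Q_tilde C D1 D2 Q R1 R2 S =
     Q + transpose (stack C) ** U_mat R2 D2 S ** stack C
     - transpose (stack C) ** U_mat R2 D2 S ** stack D1 ** matrix_inv (Lambda_hat R1 R2 D1 D2 S)
       ** transpose (stack D1) ** U_mat R2 D2 S ** stack C"

end

theory Submission
  imports Defs
begin

text \<open>For \<open>M \<ge> 0\<close> and \<open>R > 0\<close> the matrix \<open>M - M B (R + B' M B)\<^sup>-\<^sup>1 B' M\<close> is again
  nonnegative definite: its quadratic form at \<open>y\<close> equals
  \<open>(y + B u)' M (y + B u) + u' R u\<close> for \<open>u = -(R + B' M B)\<^sup>-\<^sup>1 B' M y\<close> (completing the square).
  The block-diagonal \<open>\<hat>S\<close> inherits nonnegativity from \<open>S\<close>, so \<open>U(S)\<close> is such a complement.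
  Moreover \<open>\<hat>\<Lambda>(S) = R\<^sub>1 + (D\<^sup>1)' U(S) D\<^sup>1\<close>, hence \<open>Q\<tilde>(S) = Q + C' W C\<close> where \<open>W\<close> is the
  same kind of complement built from \<open>U(S)\<close> and \<open>R\<^sub>1\<close>; so \<open>Q\<tilde>(S) \<ge> 0\<close>.\<close>

lemma transpose_add: "transpose (A + B) = transpose A + (transpose B :: 'a::ab_group_add^'n^'m)"
  by (simp add: transpose_def vec_eq_iff)

lemma transpose_diff: "transpose (A - B) = transpose A - (transpose B :: 'a::ab_group_add^'n^'m)"
  by (simp add: transpose_def vec_eq_iff)

lemma matrix_diff_ldistrib: "(A::'a::ring_1^'n^'m) ** (B - C) = A ** B - A ** C"
  by (simp add: matrix_matrix_mult_def vec_eq_iff sum_subtractf algebra_simps)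

lemma matrix_diff_rdistrib: "((A::'a::ring_1^'n^'m) - B) ** C = A ** C - B ** C"
  by (simp add: matrix_matrix_mult_def vec_eq_iff sum_subtractf algebra_simps)

lemma matrix_add_rdistrib: "((A::'a::semiring_1^'n^'m) + B) ** C = A ** C + B ** C"
  by (simp add: matrix_matrix_mult_def vec_eq_iff sum.distrib algebra_simps)

lemma matrix_vector_mult_uminus: "(A::'a::ring_1^'n^'m) *v (- x) = - (A *v x)"
  by (simp add: matrix_vector_mult_def vec_eq_iff sum_negf)

lemma inner_matrix_vector_mult: "(x::real^'m) \<bullet> ((A::real^'n^'m) *v y) = (transpose A *v x) \<bullet> y"
  by (simp add: dot_lmul_matrix)

lemma inner_vector_matrix_mult: "(x::real^'n) \<bullet> (w v* (B::real^'n^'m)) = (B *v x) \<bullet> w"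
  by (metis dot_lmul_matrix inner_commute)

lemma quadratic_form_congruence:
  "(x::real^'n) \<bullet> ((transpose B ** M ** B) *v x) = (B *v x) \<bullet> (M *v (B *v x))"
  by (simp add: matrix_vector_mul_assoc[symmetric] inner_vector_matrix_mult)

lemma nonneg_def_mat_add:
  assumes "nonneg_def_mat (A::real^'n^'n)" "nonneg_def_mat B"
  shows "nonneg_def_mat (A + B)"
  using assms unfolding nonneg_def_mat_def
  by (auto simp: transpose_add matrix_vector_mult_add_rdistrib inner_add_right)

lemma nonneg_def_mat_congruence:
  assumes "nonneg_def_mat (M::real^'m^'m)"
  shows "nonneg_def_mat (transpose B ** M ** B)"
  using assms unfolding nonneg_def_mat_def
  by (auto simp: matrix_transpose_mul matrix_mul_assoc quadratic_form_congruence)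

lemma pos_def_mat_add_congruence:
  assumes "pos_def_mat (R::real^'l^'l)" "nonneg_def_mat M"
  shows "pos_def_mat (R + transpose B ** M ** B)"
  using assms unfolding pos_def_mat_def nonneg_def_mat_def
  by (auto simp: transpose_add matrix_transpose_mul matrix_mul_assoc
      matrix_vector_mult_add_rdistrib inner_add_right quadratic_form_congruence
      intro: add_pos_nonneg)

lemma pos_def_mat_invertible:
  assumes "pos_def_mat (L::real^'n^'n)"
  shows "invertible L"
proof -
  have "x = 0" if "L *v x = 0" for x
    using assms that unfolding pos_def_mat_def by force
  then show ?thesis
    using matrix_left_invertible_ker invertible_left_inverse by blast
qed

lemma matrix_inv_inverse:
  assumes "invertible (L::'a::semiring_1^'n^'n)"
  shows matrix_inv_right: "L ** matrix_inv L = mat 1"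
    and matrix_inv_left: "matrix_inv L ** L = mat 1"
proof -
  have "\<exists>L'. L ** L' = mat 1 \<and> L' ** L = mat 1" using assms invertible_def by blast
  from someI_ex[OF this] show "L ** matrix_inv L = mat 1" "matrix_inv L ** L = mat 1"
    unfolding matrix_inv_def by auto
qed

lemma transpose_matrix_inv_symmetric:
  assumes "invertible (L::'a::comm_semiring_1^'n^'n)" "transpose L = L"
  shows "transpose (matrix_inv L) = matrix_inv L"
proof -
  have "L ** transpose (matrix_inv L) = mat 1"
    by (metis matrix_inv_left[OF assms(1)] assms(2) matrix_transpose_mul transpose_mat)
  then have "matrix_inv L ** (L ** transpose (matrix_inv L)) = matrix_inv L" by simp
  then show ?thesis by (simp add: matrix_mul_assoc matrix_inv_left[OF assms(1)])
qed

lemma schur_complement_quadratic_form: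
  fixes M :: "real^'m^'m" and B :: "real^'l^'m" and R :: "real^'l^'l" and y :: "real^'m"
  defines "L \<equiv> R + transpose B ** M ** B"
  defines "u \<equiv> - (matrix_inv L *v (transpose B *v (M *v y)))"
  assumes M: "transpose M = M" and L: "invertible L"
  shows "y \<bullet> ((M - M ** B ** matrix_inv L ** transpose B ** M) *v y)
         = (y + B *v u) \<bullet> (M *v (y + B *v u)) + u \<bullet> (R *v u)"
proof -
  define P where "P = matrix_inv L"
  define v where "v = transpose B *v (M *v y)"
  have u: "u = - (P *v v)" unfolding u_def P_def v_def ..
  have LPv: "L *v (P *v v) = v"
    by (simp add: matrix_vector_mul_assoc matrix_inv_right[OF L, folded P_def])
  have lhs: "y \<bullet> ((M - M ** B ** P ** transpose B ** M) *v y) = y \<bullet> (M *v y) - v \<bullet> (P *v v)"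
    unfolding v_def
    by (simp add: matrix_vector_mult_diff_rdistrib inner_diff_right
        matrix_vector_mul_assoc[symmetric] inner_matrix_vector_mult[of y M] M
        inner_matrix_vector_mult[of "M *v y" B])
  have cross: "(B *v u) \<bullet> (M *v y) = u \<bullet> v"
    unfolding v_def
    by (simp add: inner_matrix_vector_mult[of "B *v u" M] M inner_vector_matrix_mult inner_commute)
  then have cross': "y \<bullet> (M *v (B *v u)) = u \<bullet> v"
    by (metis M inner_matrix_vector_mult inner_commute)
  have square: "(B *v u) \<bullet> (M *v (B *v u)) + u \<bullet> (R *v u) = u \<bullet> (L *v u)"
    unfolding L_def
    by (simp add: matrix_vector_mult_add_rdistrib inner_add_right quadratic_form_congruence)
  have "u \<bullet> (L *v u) = v \<bullet> (P *v v)" "u \<bullet> v = - (v \<bullet> (P *v v))"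
    unfolding u by (simp_all add: matrix_vector_mult_uminus LPv inner_commute)
  with lhs cross cross' square show ?thesis
    by (simp add: P_def matrix_vector_right_distrib inner_add_left inner_add_right)
qed

lemma nonneg_def_mat_schur_complement:
  fixes M :: "real^'m^'m" and B :: "real^'l^'m" and R :: "real^'l^'l"
  assumes M: "nonneg_def_mat M" and R: "pos_def_mat R"
  shows "nonneg_def_mat (M - M ** B ** matrix_inv (R + transpose B ** M ** B) ** transpose B ** M)"
proof -
  define L where "L = R + transpose B ** M ** B"
  have Ms: "transpose M = M" using M unfolding nonneg_def_mat_def by simp
  have "pos_def_mat L" unfolding L_def by (rule pos_def_mat_add_congruence[OF R M])
  then have L: "invertible L" "transpose L = L"
    using pos_def_mat_invertible pos_def_mat_def by auto
  have "transpose (matrix_inv L) = matrix_inv L"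
    by (rule transpose_matrix_inv_symmetric[OF L])
  then have sym: "transpose (M - M ** B ** matrix_inv L ** transpose B ** M)
                  = M - M ** B ** matrix_inv L ** transpose B ** M"
    by (simp add: transpose_diff matrix_transpose_mul Ms matrix_mul_assoc)
  have "0 \<le> y \<bullet> ((M - M ** B ** matrix_inv L ** transpose B ** M) *v y)" for y
  proof -
    define u where "u = - (matrix_inv L *v (transpose B *v (M *v y)))"
    have "0 \<le> u \<bullet> (R *v u)"
      using R unfolding pos_def_mat_def by (cases "u = 0") (auto intro: less_imp_le)
    moreover have "0 \<le> (y + B *v u) \<bullet> (M *v (y + B *v u))"
      using M unfolding nonneg_def_mat_def by simp
    ultimately show ?thesis
      using schur_complement_quadratic_form[OF Ms L(1)[unfolded L_def], of y]
      unfolding L_def u_def by linarith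
  qed
  with sym show ?thesis unfolding nonneg_def_mat_def L_def by simp
qed

lemma hat_mult_vector:
  fixes S :: "real^'n^'n" and x :: "real^('d::finite \<times> 'n)"
  shows "(hat S *v x) $ (j, i) = (S *v (\<chi> k. x $ (j, k))) $ i"
proof -
  have "(hat S *v x) $ (j, i)
        = (\<Sum>q\<in>UNIV \<times> UNIV. (if j = fst q then S $ i $ snd q else 0) * x $ q)"
    by (simp add: matrix_vector_mult_def hat_def UNIV_Times_UNIV[symmetric]
        del: UNIV_Times_UNIV cong: if_cong)
  also have "\<dots> = (\<Sum>j'\<in>UNIV. \<Sum>k\<in>UNIV. (if j = j' then S $ i $ k else 0) * x $ (j', k))"
    by (simp add: sum.cartesian_product split_def del: UNIV_Times_UNIV)
  also have "\<dots> = (\<Sum>k\<in>UNIV. S $ i $ k * x $ (j, k))"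
    by (simp add: if_distrib if_distribR sum.If_cases cong: if_cong)
  finally show ?thesis by (simp add: matrix_vector_mult_def)
qed

lemma nonneg_def_mat_hat:
  assumes S: "nonneg_def_mat (S::real^'n^'n)"
  shows "nonneg_def_mat (hat S :: real^('d::finite \<times> 'n)^('d \<times> 'n))"
  unfolding nonneg_def_mat_def
proof (intro conjI allI)
  have "S $ k $ i = S $ i $ k" for i k
    using S unfolding nonneg_def_mat_def by (metis transpose_def vec_lambda_beta)
  then show "transpose (hat S :: real^('d \<times> 'n)^('d \<times> 'n)) = hat S"
    by (simp add: hat_def transpose_def vec_eq_iff)
  fix x :: "real^('d \<times> 'n)"
  have "x \<bullet> (hat S *v x) = (\<Sum>p\<in>UNIV \<times> UNIV. x $ p * (hat S *v x) $ p)"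
    by (simp add: inner_vec_def UNIV_Times_UNIV[symmetric] del: UNIV_Times_UNIV)
  also have "\<dots> = (\<Sum>j\<in>UNIV. \<Sum>i\<in>UNIV. x $ (j, i) * (hat S *v x) $ (j, i))"
    by (simp add: sum.cartesian_product)
  also have "\<dots> = (\<Sum>j\<in>UNIV. (\<chi> k. x $ (j, k)) \<bullet> (S *v (\<chi> k. x $ (j, k))))"
    by (simp add: hat_mult_vector inner_vec_def)
  also have "\<dots> \<ge> 0"
    using S unfolding nonneg_def_mat_def by (intro sum_nonneg) auto
  finally show "0 \<le> x \<bullet> (hat S *v x)" .
qed

lemma Lambda_hat_eq:
  "Lambda_hat R1 R2 D1 D2 S = R1 + transpose (stack D1) ** U_mat R2 D2 S ** stack D1"
  unfolding Lambda_hat_def Lambda_i_def U_mat_def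
  by (simp add: matrix_diff_ldistrib matrix_diff_rdistrib matrix_add_ldistrib
      matrix_add_rdistrib matrix_mul_assoc)

lemma Q_tilde_eq:
  fixes C :: "'d::finite \<Rightarrow> real^'n^'n" and D2 :: "'d \<Rightarrow> real^'l^'n"
    and R2 :: "real^'l^'l" and S :: "real^'n^'n"
  defines "U \<equiv> U_mat R2 D2 S"
  shows "Q_tilde C D1 D2 Q R1 R2 S = Q + transpose (stack C) **
           (U - U ** stack D1 ** matrix_inv (R1 + transpose (stack D1) ** U ** stack D1)
              ** transpose (stack D1) ** U) ** stack C"
  unfolding Q_tilde_def Lambda_hat_eq U_def
  by (simp add: matrix_diff_ldistrib matrix_diff_rdistrib matrix_mul_assoc)

lemma nonneg_def_mat_Q_tilde:
  fixes C :: "'d::finite \<Rightarrow> real^'n^'n"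
  assumes Q: "nonneg_def_mat Q" and R1: "pos_def_mat R1" and R2: "pos_def_mat R2"
    and S: "nonneg_def_mat S"
  shows "nonneg_def_mat (Q_tilde C D1 D2 Q R1 R2 S)"
proof -
  have "nonneg_def_mat (U_mat R2 D2 S :: real^('d \<times> 'n)^('d \<times> 'n))"
    unfolding U_mat_def Lambda_i_def
    by (rule nonneg_def_mat_schur_complement[OF nonneg_def_mat_hat[OF S] R2])
  then show ?thesis
    unfolding Q_tilde_eq
    by (intro nonneg_def_mat_add[OF Q] nonneg_def_mat_congruence
        nonneg_def_mat_schur_complement R1)
qed

theorem lemma3p1:
  fixes T :: real
    and C :: "real \<Rightarrow> 'd::finite \<Rightarrow> real^'n^'n"
    and D1 :: "real \<Rightarrow> 'd \<Rightarrow> real^'l1^'n"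
    and D2 :: "real \<Rightarrow> 'd \<Rightarrow> real^'l2^'n"
    and Q :: "real \<Rightarrow> real^'n^'n"
    and R1 :: "real \<Rightarrow> real^'l1^'l1"
    and R2 :: "real \<Rightarrow> real^'l2^'l2"
  assumes "T > 0"
    and "\<forall>t\<in>{0..T}. nonneg_def_mat (Q t)"
    and "\<forall>t\<in>{0..T}. pos_def_mat (R1 t)"
    and "\<forall>t\<in>{0..T}. pos_def_mat (R2 t)"
  shows "\<forall>t\<in>{0..T}. \<forall>S::real^'n^'n. nonneg_def_mat S \<longrightarrow>
           nonneg_def_mat (Q_tilde (C t) (D1 t) (D2 t) (Q t) (R1 t) (R2 t) S)"
  using assms(2-4) by (blast intro: nonneg_def_mat_Q_tilde)

end
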